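(* Let $\gamma\in\mathcal{M}_k\otimes\mathcal{M}_m$ be a pure state, i.e., a state of rank $1$. Then $\gamma\in CR_{k,m}$ if and only if $\gamma$ is separable, i.e., $\gamma=vv^*$ with $v=a\otimes b$ for some $a\in\mathbb{C}^k$, $b\in\mathbb{C}^m$.
   Context: $\mathcal{M}_k$ denotes the complex $k\times k$ matrices, and $\mathcal{M}_k\otimes\mathcal{M}_m$ is identified with $\mathcal{M}_{km}$ via the Kronecker product. A state is a positive semidefinite Hermitian matrix (not necessarily of trace one). For $\gamma=\sum_{i=1}^nA_i\otimes B_i\in\mathcal{M}_k\otimes\mathcal{M}_m$ define $G_\gamma:\mathcal{M}_k\to\mathcal{M}_m$, $G_\gamma(X)=\sum_i\mathrm{tr}(A_iX)B_i$, and $F_\gamma:\mathcal{M}_m\to\mathcal{M}_k$, $F_\gamma(Y)=\sum_i\mathrm{tr}(B_iY)A_i$. A linear map is positive if it maps positive semidefinite matrices to positive semidefinite matrices, and self-adjoint if self-adjoint with respect to $\langle X,Y\rangle=\mathrm{tr}(XY^* )$. For orthogonal projections $V,W$, $V\mathcal{M}_kW=\{VXW:X\in\mathcal{M}_k\}$. Given an orthogonal projection $V\in\mathcal{M}_k$ and a positive map $T:V\mathcal{M}_kV\to V\mathcal{M}_kV$, $T$ is irreducible if the only orthogonal projections $W$ with $W\mathcal{M}_kW\subseteq V\mathcal{M}_kV$ and $T(W\mathcal{M}_kW)\subseteq W\mathcal{M}_kW$ are $W=0$ and $W=V$. A self-adjoint positive map $T:\mathcal{M}_k\to\mathcal{M}_k$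 is completely reducible if there are orthogonal projections $W_1,\dots,W_l$ with $W_iW_j=0$ for $i\ne j$, $T(W_i\mathcal{M}_kW_i)\subseteq W_i\mathcal{M}_kW_i$ and $T|_{W_i\mathcal{M}_kW_i}$ irreducible for every $i$, and $T|_R\equiv0$, where $R$ is the orthogonal complement (trace inner product) of $\bigoplus_iW_i\mathcal{M}_kW_i$ in $\mathcal{M}_k$. $CR_{k,m}$ is the set of states $\gamma\in\mathcal{M}_k\otimes\mathcal{M}_m$ such that $F_\gamma\circ G_\gamma:\mathcal{M}_k\to\mathcal{M}_k$ is completely reducible. *)

theory Defs
  imports "HOL-Analysis.Analysis"
begin

text \<open>Matrices in M_k are complex^'k^'k with 'k a finite index type (k = CARD('k)).
  M_k tensor M_m is identified with complex^('k\<times>'m)^('k\<times>'m): the Kronecker product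
  A\<otimes>B has entry (i,j),(i',l) equal to A i i' * B j l.\<close>

definition cadj :: "complex^'n^'m \<Rightarrow> complex^'m^'n" where
  "cadj A = (\<chi> i j. cnj (A $ j $ i))"

definition kron :: "complex^'k^'k \<Rightarrow> complex^'m^'m \<Rightarrow> complex^('k\<times>'m)^('k\<times>'m)" where
  "kron A B = (\<chi> p q. A $ fst p $ fst q * B $ snd p $ snd q)"

definition kronv :: "complex^'k \<Rightarrow> complex^'m \<Rightarrow> complex^('k\<times>'m)" where
  "kronv a b = (\<chi> p. a $ fst p * b $ snd p)"

definition outer :: "complex^'n \<Rightarrow> complex^'n^'n" where
  "outer v = (\<chi> i j. v $ i * cnj (v $ j))"

definition hermitian :: "complex^'n^'n \<Rightarrow> bool" where
  "hermitian A \<longleftrightarrow> cadj A = A"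

text \<open>positive semidefinite Hermitian matrix (a state, not necessarily of trace one)\<close>
definition psd :: "complex^'n^'n \<Rightarrow> bool" where
  "psd A \<longleftrightarrow> hermitian A \<and> (\<forall>x. 0 \<le> Re (\<Sum>i\<in>UNIV. cnj (x $ i) * (A *v x) $ i))"

text \<open>For gamma = sum A_i \<otimes> B_i, G_gamma(X) = sum tr(A_i X) B_i; this is
  linear in gamma, and for gamma = A\<otimes>B the entry formula below gives exactly tr(AX) B,
  so these are the maps of the paper written in entries (independent of decomposition).\<close>
definition Gmap :: "complex^('k\<times>'m)^('k\<times>'m) \<Rightarrow> complex^'k^'k \<Rightarrow> complex^'m^'m" where
  "Gmap \<gamma> X = (\<chi> j l. \<Sum>i\<in>UNIV. \<Sum>i'\<in>UNIV. \<gamma> $ (i, j) $ (i', l) * X $ i' $ i)"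

definition Fmap :: "complex^('k\<times>'m)^('k\<times>'m) \<Rightarrow> complex^'m^'m \<Rightarrow> complex^'k^'k" where
  "Fmap \<gamma> Y = (\<chi> i i'. \<Sum>j\<in>UNIV. \<Sum>l\<in>UNIV. \<gamma> $ (i, j) $ (i', l) * Y $ l $ j)"

definition positive_map :: "(complex^'n^'n \<Rightarrow> complex^'n^'n) \<Rightarrow> bool" where
  "positive_map T \<longleftrightarrow> (\<forall>X. psd X \<longrightarrow> psd (T X))"

definition selfadjoint_map :: "(complex^'n^'n \<Rightarrow> complex^'n^'n) \<Rightarrow> bool" where
  "selfadjoint_map T \<longleftrightarrow> (\<forall>X Y. trace (T X ** cadj Y) = trace (X ** cadj (T Y)))"

definition orth_proj :: "complex^'n^'n \<Rightarrow> bool" where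
  "orth_proj W \<longleftrightarrow> cadj W = W \<and> W ** W = W"

definition corner :: "complex^'n^'n \<Rightarrow> complex^'n^'n \<Rightarrow> (complex^'n^'n) set" where
  "corner V W = {V ** X ** W | X. True}"

text \<open>T restricted to V M_k V (assumed to map it into itself) is irreducible\<close>
definition irreducible_on :: "complex^'n^'n \<Rightarrow> (complex^'n^'n \<Rightarrow> complex^'n^'n) \<Rightarrow> bool" where
  "irreducible_on V T \<longleftrightarrow>
     (\<forall>W. orth_proj W \<and> corner W W \<subseteq> corner V V \<and> T ` corner W W \<subseteq> corner W W
          \<longrightarrow> W = 0 \<or> W = V)"

definition completely_reducible :: "(complex^'n^'n \<Rightarrow> complex^'n^'n) \<Rightarrow> bool" where
  "completely_reducible T \<longleftrightarrow> selfadjoint_map T \<and> positive_map T \<and>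
     (\<exists>Ws :: (complex^'n^'n) list.
        (\<forall>i<length Ws. orth_proj (Ws ! i)) \<and>
        (\<forall>i<length Ws. \<forall>j<length Ws. i \<noteq> j \<longrightarrow> Ws ! i ** Ws ! j = 0) \<and>
        (\<forall>i<length Ws. T ` corner (Ws ! i) (Ws ! i) \<subseteq> corner (Ws ! i) (Ws ! i)) \<and>
        (\<forall>i<length Ws. irreducible_on (Ws ! i) T) \<and>
        (\<forall>X. (\<forall>i<length Ws. \<forall>Y\<in>corner (Ws ! i) (Ws ! i). trace (X ** cadj Y) = 0)
             \<longrightarrow> T X = 0))"

definition CR :: "(complex^('k::finite\<times>'m::finite)^('k\<times>'m)) set" where
  "CR = {\<gamma>. psd \<gamma> \<and> completely_reducible (Fmap \<gamma> \<circ> Gmap \<gamma>)}"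

end

theory Submission
  imports Defs
begin

text \<open>
  For a pure state \<open>\<gamma> = v v\<^sup>*\<close> the map \<open>F\<^sub>\<gamma> \<circ> G\<^sub>\<gamma>\<close> is the sandwich \<open>X \<mapsto> A X A\<close>, where \<open>A\<close> is
  the reduced state of \<open>v\<close> (its partial trace over the second factor), and \<open>v\<close> is a product
  vector exactly when \<open>A\<close> has rank at most one. If \<open>A = \<mu> e e\<^sup>*\<close>, the single block \<open>e e\<^sup>*\<close>
  witnesses complete reducibility. Conversely, complete reducibility puts \<open>A\<close> inside a single
  irreducible block \<open>W\<close>; the projection onto a top eigenvector \<open>e\<close> of \<open>A\<close> spans an invariant
  corner inside \<open>W\<close>, so irreducibility forces \<open>W = e e\<^sup>*\<close> and \<open>A = l e e\<^sup>*\<close>.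
\<close>

lemma cadj_matrix_mult: "cadj ((A::complex^'n^'m) ** (B::complex^'p^'n)) = cadj B ** cadj A"
  by (simp add: cadj_def matrix_matrix_mult_def vec_eq_iff mult.commute)

lemma cadj_cadj [simp]: "cadj (cadj A) = (A::complex^'n^'m)"
  by (simp add: cadj_def vec_eq_iff)

lemma cadj_scaleR: "cadj (c *\<^sub>R A) = c *\<^sub>R cadj (A::complex^'n^'n)"
  by (simp add: cadj_def vec_eq_iff)

lemma cadj_zero [simp]: "cadj (0::complex^'n^'m) = 0"
  by (simp add: cadj_def vec_eq_iff)

lemma hermitian_cnj_entry: "hermitian A \<Longrightarrow> cnj (A $ i $ j) = A $ j $ i"
  unfolding hermitian_def cadj_def by (metis vec_lambda_beta)

lemma hermitian_mult_eq_self_commute: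
  assumes "hermitian A" "hermitian W" "W ** A = A"
  shows "A ** W = A"
  using assms cadj_matrix_mult[of W A] by (simp add: hermitian_def)

lemma matrix_diff_rdistrib: "(A - B) ** (C::'a::ring_1^'n^'m) = A ** C - B ** C"
  by (simp add: matrix_matrix_mult_def vec_eq_iff sum_subtractf ring_distribs)

lemma matrix_vector_mult_scaleR_right: "(A::complex^'n^'m) *v (c *\<^sub>R x) = c *\<^sub>R (A *v x)"
  by (simp add: matrix_vector_mult_def vec_eq_iff scaleR_sum_right)

lemma matrix_vector_mult_scaleR_left: "(c *\<^sub>R A) *v x = c *\<^sub>R ((A::complex^'n^'m) *v x)"
  by (simp add: matrix_vector_mult_def vec_eq_iff scaleR_sum_right)

lemma matrix_vector_mult_axis: "(A *v axis j (1::complex)) $ i = A $ i $ j"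
  by (simp add: matrix_vector_mult_def axis_def if_distrib cong: if_cong)

definition cinner :: "complex^'n \<Rightarrow> complex^'n \<Rightarrow> complex" where
  "cinner x y = (\<Sum>i\<in>UNIV. cnj (x $ i) * y $ i)"

lemma psd_iff_cinner: "psd A \<longleftrightarrow> hermitian A \<and> (\<forall>x. 0 \<le> Re (cinner x (A *v x)))"
  by (simp add: psd_def cinner_def)

lemma cinner_self: "cinner x x = complex_of_real ((norm x)\<^sup>2)"
proof -
  have "(norm x)\<^sup>2 = (\<Sum>i\<in>UNIV. (cmod (x $ i))\<^sup>2)"
    unfolding norm_vec_def L2_set_def by (simp add: sum_nonneg)
  moreover have "cnj z * z = complex_of_real ((cmod z)\<^sup>2)" for z
    by (subst complex_norm_square) (rule mult.commute)
  ultimately show ?thesis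
    by (simp only: cinner_def of_real_sum)
qed

lemma cinner_add_left: "cinner (x + y) z = cinner x z + cinner y z"
  by (simp add: cinner_def ring_distribs sum.distrib)

lemma cinner_add_right: "cinner x (y + z) = cinner x y + cinner x z"
  by (simp add: cinner_def ring_distribs sum.distrib)

lemma cinner_diff_right: "cinner x (y - z) = cinner x y - cinner x z"
  by (simp add: cinner_def ring_distribs sum_subtractf)

lemma cinner_scaleR_left: "cinner (c *\<^sub>R x) y = c *\<^sub>R cinner x y"
  by (simp add: cinner_def scaleR_sum_right)

lemma cinner_scaleR_right: "cinner x (c *\<^sub>R y) = c *\<^sub>R cinner x y"
  by (simp add: cinner_def scaleR_sum_right)

lemma cinner_axis_left: "cinner (axis j 1) y = y $ j"
proof -
  have "cinner (axis j 1) y = (\<Sum>i\<in>UNIV. if i = j then y $ i else 0)"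
    unfolding cinner_def by (rule sum.cong) (auto simp: axis_def)
  then show ?thesis by simp
qed

lemma norm_axis_1_complex: "norm (axis i (1::complex)) = 1"
proof -
  have "complex_of_real ((norm (axis i (1::complex)))\<^sup>2) = 1"
    unfolding cinner_self[symmetric] cinner_axis_left by (simp add: axis_def)
  then show ?thesis by (simp add: power2_eq_1_iff)
qed

lemma cinner_hermitian:
  assumes "hermitian A"
  shows "cinner x (A *v y) = cinner (A *v x) y"
proof -
  have "cinner x (A *v y) = (\<Sum>i\<in>UNIV. \<Sum>j\<in>UNIV. cnj (x $ i) * A $ i $ j * y $ j)"
    by (simp add: cinner_def matrix_vector_mult_def sum_distrib_left mult.assoc)
  also have "\<dots> = (\<Sum>j\<in>UNIV. \<Sum>i\<in>UNIV. cnj (x $ i) * A $ i $ j * y $ j)"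
    by (rule sum.swap)
  also have "\<dots> = cinner (A *v x) y"
    by (simp add: cinner_def matrix_vector_mult_def sum_distrib_right sum_distrib_left
        hermitian_cnj_entry[OF assms] mult_ac)
  finally show ?thesis .
qed

lemma cinner_commute_hermitian:
  assumes "hermitian A"
  shows "cinner y (A *v x) = cnj (cinner x (A *v y))"
  unfolding cinner_hermitian[OF assms, of y x] by (simp add: cinner_def mult.commute)

lemma matrix_mult_cadj_diagonal:
  "((M::complex^'n^'m) ** cadj M) $ i $ i = complex_of_real ((norm (M $ i))\<^sup>2)"
proof -
  have "(M ** cadj M) $ i $ i = cinner (M $ i) (M $ i)"
    by (simp add: cinner_def matrix_matrix_mult_def cadj_def mult.commute)
  then show ?thesis by (simp only: cinner_self)
qed

lemma mult_cadj_eq_0_imp_eq_0: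
  fixes M :: "complex^'n^'m"
  assumes "M ** cadj M = 0"
  shows "M = 0"
proof -
  have "norm (M $ i) = 0" for i
    using matrix_mult_cadj_diagonal[of M i] assms by simp
  then show ?thesis by (simp add: vec_eq_iff)
qed

lemma hermitian_cube_eq_0_imp_eq_0:
  fixes A :: "complex^'n^'n"
  assumes "hermitian A" and "A ** A ** A = 0"
  shows "A = 0"
proof -
  have cA: "cadj A = A" using assms(1) by (simp add: hermitian_def)
  with assms(2) have "(A ** A) ** cadj (A ** A) = 0"
    by (simp only: cadj_matrix_mult matrix_mul_assoc) simp
  then have "A ** cadj A = 0"
    unfolding cA by (rule mult_cadj_eq_0_imp_eq_0)
  then show ?thesis by (rule mult_cadj_eq_0_imp_eq_0)
qed

lemma matrix_mult_all_mult_eq_0: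
  fixes M N :: "complex^'n^'n"
  assumes "\<And>Y. M ** Y ** N = 0"
  shows "M = 0 \<or> N = 0"
proof (rule ccontr)
  assume "\<not> ?thesis"
  then obtain a b c d where ab: "M $ a $ b \<noteq> 0" and cd: "N $ c $ d \<noteq> 0"
    by (auto simp: vec_eq_iff)
  define Y :: "complex^'n^'n" where "Y = (\<chi> i j. if i = b \<and> j = c then 1 else 0)"
  have MY: "(M ** Y) $ a $ k = (if k = c then M $ a $ b else 0)" for k
    by (simp add: matrix_matrix_mult_def Y_def if_distrib cong: if_cong)
  have "(M ** Y ** N) $ a $ d = (\<Sum>k\<in>UNIV. (if k = c then M $ a $ b else 0) * N $ k $ d)"
    by (simp only: matrix_matrix_mult_def[of "M ** Y" N] vec_lambda_beta MY)
  also have "\<dots> = (\<Sum>k\<in>UNIV. if k = c then M $ a $ b * N $ k $ d else 0)"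
    by (rule sum.cong) auto
  also have "\<dots> = M $ a $ b * N $ c $ d"
    by simp
  finally have "(M ** Y ** N) $ a $ d = M $ a $ b * N $ c $ d" .
  with ab cd assms show False by simp
qed

lemma cadj_outer [simp]: "cadj (outer e) = outer e"
  by (simp add: cadj_def outer_def vec_eq_iff mult.commute)

lemma outer_eq_0_iff: "outer e = 0 \<longleftrightarrow> e = 0"
proof
  assume "outer e = 0"
  then have "outer e $ i $ i = 0" for i by simp
  then show "e = 0" by (simp add: outer_def vec_eq_iff)
qed (simp add: outer_def vec_eq_iff)

lemma outer_scaleR: "outer (c *\<^sub>R x) = c\<^sup>2 *\<^sub>R outer x"
  by (simp add: outer_def vec_eq_iff scaleR_conv_of_real[where 'a=complex] power2_eq_square mult_ac)

lemma outer_mult_outer: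
  assumes "norm e = 1"
  shows "outer e ** outer e = outer e"
proof -
  have "(outer e ** outer e) $ i $ j = outer e $ i $ j * cinner e e" for i j
    by (simp add: outer_def cinner_def matrix_matrix_mult_def sum_distrib_left mult_ac)
  then show ?thesis
    using assms by (simp add: cinner_self vec_eq_iff)
qed

lemma matrix_mult_outer: "M ** outer e = (\<chi> i j. (M *v e) $ i * cnj (e $ j))"
  by (simp add: outer_def matrix_matrix_mult_def matrix_vector_mult_def vec_eq_iff
      sum_distrib_left sum_distrib_right mult_ac)

lemma outer_mult_matrix: "outer e ** M = (\<chi> i j. e $ i * (\<Sum>k\<in>UNIV. cnj (e $ k) * M $ k $ j))"
  by (simp add: outer_def matrix_matrix_mult_def vec_eq_iff sum_distrib_left mult_ac)

lemma matrix_mult_outer_eigenvector: "A *v e = l *\<^sub>R e \<Longrightarrow> A ** outer e = l *\<^sub>R outer e"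
  unfolding matrix_mult_outer by (simp add: outer_def vec_eq_iff)

lemma outer_mult_matrix_eigenvector:
  assumes "hermitian A" "A *v e = l *\<^sub>R e"
  shows "outer e ** A = l *\<^sub>R outer e"
  using arg_cong[OF matrix_mult_outer_eigenvector[OF assms(2)], of cadj] assms(1)
  by (simp add: cadj_matrix_mult cadj_scaleR hermitian_def)

lemma outer_sandwich: "outer e ** Z ** outer e = (\<chi> i j. cinner e (Z *v e) * outer e $ i $ j)"
proof -
  have "(outer e ** Z ** outer e) $ i $ j = cinner e (Z *v e) * outer e $ i $ j" for i j
  proof -
    have "(outer e ** Z ** outer e) $ i $ j
        = (\<Sum>m\<in>UNIV. \<Sum>k\<in>UNIV. e $ i * cnj (e $ j) * (cnj (e $ k) * Z $ k $ m * e $ m))"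
      by (simp add: outer_def matrix_matrix_mult_def sum_distrib_left sum_distrib_right mult_ac)
    also have "\<dots> = (\<Sum>k\<in>UNIV. \<Sum>m\<in>UNIV. e $ i * cnj (e $ j) * (cnj (e $ k) * Z $ k $ m * e $ m))"
      by (rule sum.swap)
    also have "\<dots> = cinner e (Z *v e) * outer e $ i $ j"
      by (simp add: cinner_def outer_def matrix_vector_mult_def sum_distrib_left sum_distrib_right mult_ac)
    finally show ?thesis .
  qed
  then show ?thesis by (simp add: vec_eq_iff)
qed

lemma trace_mult_outer: "trace (Z ** outer e) = cinner e (Z *v e)"
  by (simp add: trace_def cinner_def outer_def matrix_matrix_mult_def matrix_vector_mult_def
      sum_distrib_left sum_distrib_right mult_ac)

lemma rank_1_imp_product_entries:
  fixes g :: "complex^'n^'m"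
  assumes "rank g = 1"
  shows "\<exists>c d. \<forall>p q. g $ p $ q = d $ p * c $ q"
proof -
  obtain B where B: "B \<subseteq> rows g" "vec.independent B" "rows g \<subseteq> vec.span B"
      "card B = vec.dim (rows g)"
    by (rule vec.basis_exists)
  with assms have "card B = 1" by (simp add: row_rank_def_gen)
  then obtain c where Bc: "B = {c}" by (auto simp: card_Suc_eq)
  have "\<exists>k. g $ p = k *s c" for p
  proof -
    have "row p g \<in> rows g" by (auto simp: rows_def)
    then have "row p g \<in> range (\<lambda>k. k *s c)" using B(3) Bc vec.span_singleton by blast
    moreover have "row p g = g $ p" by (simp add: row_def vec_eq_iff)
    ultimately show ?thesis by auto
  qed
  then obtain k where "\<And>p. g $ p = k p *s c" by metis
  then show ?thesis
    by (intro exI[of _ c] exI[of _ "\<chi> p. k p"]) simp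
qed

lemma rank_1_nonzero:
  fixes g :: "complex^'n^'m"
  assumes "rank g = 1"
  shows "g \<noteq> 0"
proof
  assume "g = 0"
  then have "rows g \<subseteq> vec.span {}"
    by (auto simp: rows_def row_def vec_eq_iff vec.span_empty)
  then have "vec.dim (rows g) = 0"
    using vec.dim_mono[of "rows g" "{}"] by simp
  with assms show False by (simp add: row_rank_def_gen)
qed

lemma psd_diagonal_nonneg: "psd A \<Longrightarrow> 0 \<le> Re (A $ p $ p)"
  unfolding psd_iff_cinner
  by (metis cinner_axis_left matrix_vector_mult_axis)

lemma psd_rank_1_imp_outer:
  fixes g :: "complex^'n^'n"
  assumes psd: "psd g" and rank: "rank g = 1"
  shows "\<exists>v. g = outer v"
proof -
  obtain c d where fac: "\<And>p q. g $ p $ q = d $ p * c $ q"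
    using rank_1_imp_product_entries[OF rank] by blast
  have herm: "hermitian g" using psd by (simp add: psd_def)
  have minor: "g $ p $ p0 * g $ p0 $ q = g $ p $ q * g $ p0 $ p0" for p q p0
    by (simp add: fac)
  obtain p0 where p0: "g $ p0 $ p0 \<noteq> 0"
  proof (rule ccontr)
    assume "\<not> thesis"
    then have diag: "g $ p $ p = 0" for p using that by blast
    have "g $ p $ q = 0" for p q
    proof -
      have "g $ p $ q * cnj (g $ p $ q) = g $ p $ p * g $ q $ q"
        using minor[of p q p] hermitian_cnj_entry[OF herm, of p q] by (simp add: fac)
      then show ?thesis using diag by simp
    qed
    then have "g = 0" by (simp add: vec_eq_iff)
    with rank_1_nonzero[OF rank] show False by simp
  qed
  define r where "r = Re (g $ p0 $ p0)"
  have g_r: "g $ p0 $ p0 = complex_of_real r"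
    using hermitian_cnj_entry[OF herm, of p0 p0] unfolding r_def by (simp add: complex_eq_iff)
  with p0 psd_diagonal_nonneg[OF psd, of p0] have "r > 0"
    unfolding r_def by (auto simp: less_le)
  then have sqrt_r: "complex_of_real (sqrt r) * complex_of_real (sqrt r) = g $ p0 $ p0"
    by (simp add: of_real_mult[symmetric] g_r del: of_real_mult)
  define v where "v = (\<chi> p. g $ p $ p0 / complex_of_real (sqrt r))"
  have "g $ p $ q = v $ p * cnj (v $ q)" for p q
  proof -
    have "v $ p * cnj (v $ q) = g $ p $ p0 * g $ p0 $ q / g $ p0 $ p0"
      using hermitian_cnj_entry[OF herm, of q p0] unfolding v_def sqrt_r[symmetric] by simp
    also have "\<dots> = g $ p $ q" using minor[of p p0 q] p0 by simp
    finally show ?thesis by simp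
  qed
  then show ?thesis by (auto simp: outer_def vec_eq_iff)
qed

section \<open>A top eigenvector of a Hermitian matrix\<close>

lemma nonneg_quadratic_imp_linear_coeff_0:
  fixes a r :: real
  assumes "\<And>t. 0 \<le> 2 * t * a + t\<^sup>2 * r"
  shows "a = 0"
proof (rule ccontr)
  assume "a \<noteq> 0"
  define s where "s = \<bar>r\<bar> + 1"
  have "s > 0" by (simp add: s_def add_pos_nonneg)
  define t where "t = - a / s"
  have "2 * t * a + t\<^sup>2 * r \<le> 2 * t * a + t\<^sup>2 * s"
    by (simp add: s_def mult_left_mono)
  also have "\<dots> = - a\<^sup>2 / s"
    using \<open>s > 0\<close> by (simp add: t_def power2_eq_square field_simps)
  also have "\<dots> < 0"
    using \<open>a \<noteq> 0\<close> \<open>s > 0\<close> by simp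
  finally show False using assms[of t] by simp
qed

lemma psd_form_eq_0_imp_kernel:
  fixes B :: "complex^'n^'n"
  assumes psd: "psd B" and zero: "Re (cinner e (B *v e)) = 0"
  shows "B *v e = 0"
proof -
  have herm: "hermitian B" and pos: "\<And>x. 0 \<le> Re (cinner x (B *v x))"
    using psd by (simp_all add: psd_iff_cinner)
  \<comment> \<open>Along \<open>e + t d\<close> with \<open>d = B e\<close> the form is \<open>2 t \<parallel>d\<parallel>\<^sup>2 + O(t\<^sup>2) \<ge> 0\<close>, forcing \<open>d = 0\<close>.\<close>
  define d where "d = B *v e"
  define r where "r = Re (cinner d (B *v d))"
  have "0 \<le> 2 * t * (norm d)\<^sup>2 + t\<^sup>2 * r" for t
  proof -
    have "cinner (e + t *\<^sub>R d) (B *v (e + t *\<^sub>R d))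
        = cinner e (B *v e) + t *\<^sub>R (cinner d d + cnj (cinner d d)) + (t * t) *\<^sub>R cinner d (B *v d)"
      by (simp add: matrix_vector_right_distrib matrix_vector_mult_scaleR_right cinner_add_left
          cinner_add_right cinner_scaleR_left cinner_scaleR_right cinner_commute_hermitian[OF herm, of e]
          d_def[symmetric] algebra_simps)
    then have "Re (cinner (e + t *\<^sub>R d) (B *v (e + t *\<^sub>R d))) = 2 * t * (norm d)\<^sup>2 + t\<^sup>2 * r"
      using zero by (simp add: cinner_self r_def power2_eq_square)
    then show ?thesis using pos by metis
  qed
  then have "(norm d)\<^sup>2 = 0" by (rule nonneg_quadratic_imp_linear_coeff_0)
  then show ?thesis by (simp add: d_def)
qed

lemma hermitian_positive_eigenvector:
  fixes A :: "complex^'n^'n"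
  assumes herm: "hermitian A" and diag: "0 < Re (A $ i $ i)"
  shows "\<exists>e l. norm e = 1 \<and> 0 < l \<and> A *v e = l *\<^sub>R e"
proof -
  define q where "q x = Re (cinner x (A *v x))" for x
  have "continuous_on (sphere 0 1) q"
    unfolding q_def cinner_def matrix_vector_mult_def by (intro continuous_intros)
  moreover have "axis i 1 \<in> sphere (0::complex^'n) 1"
    by (simp add: norm_axis_1_complex)
  ultimately obtain e where e: "e \<in> sphere 0 1" and max: "\<And>y. y \<in> sphere 0 1 \<Longrightarrow> q y \<le> q e"
    using continuous_attains_sup[OF compact_sphere] by blast
  define l where "l = q e"
  have "q (axis i 1) = Re (A $ i $ i)"
    by (simp add: q_def cinner_axis_left matrix_vector_mult_axis)
  with max[of "axis i 1"] diag have "0 < l"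
    by (simp add: l_def norm_axis_1_complex)
  have bound: "q x \<le> l * (norm x)\<^sup>2" for x
  proof (cases "x = 0")
    case False
    have "q x = (norm x)\<^sup>2 * q ((1 / norm x) *\<^sub>R x)"
      using False by (simp add: q_def matrix_vector_mult_scaleR_right cinner_scaleR_left
          cinner_scaleR_right power2_eq_square)
    also have "\<dots> \<le> (norm x)\<^sup>2 * l"
      using False max[of "(1 / norm x) *\<^sub>R x"] by (simp add: l_def)
    finally show ?thesis by (simp add: mult.commute)
  qed (simp add: q_def cinner_def)
  \<comment> \<open>\<open>l\<close> is the top eigenvalue: \<open>l \<cdot> 1 - A\<close> is positive and its form vanishes at the maximiser \<open>e\<close>.\<close>
  define B where "B = l *\<^sub>R mat 1 - A"
  have B_mult: "B *v x = l *\<^sub>R x - A *v x" for x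
    by (simp add: B_def matrix_vector_mult_diff_rdistrib matrix_vector_mult_scaleR_left)
  have B_form: "Re (cinner x (B *v x)) = l * (norm x)\<^sup>2 - q x" for x
    by (simp add: B_mult cinner_diff_right cinner_scaleR_right cinner_self q_def)
  have "hermitian B"
    using herm unfolding B_def hermitian_def cadj_def by (simp add: vec_eq_iff mat_def)
  moreover have "0 \<le> Re (cinner x (B *v x))" for x
    using bound[of x] B_form[of x] by simp
  ultimately have "psd B" by (simp add: psd_iff_cinner)
  then have "B *v e = 0"
    by (rule psd_form_eq_0_imp_kernel) (use B_form[of e] e in \<open>simp add: l_def\<close>)
  then have "A *v e = l *\<^sub>R e" by (simp add: B_mult)
  with e \<open>0 < l\<close> show ?thesis by auto
qed

section \<open>Complete reducibility of sandwich maps\<close>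

lemma selfadjoint_map_sandwich:
  fixes A :: "complex^'n^'n"
  assumes "hermitian A"
  shows "selfadjoint_map (\<lambda>X. A ** X ** A)"
  unfolding selfadjoint_map_def
proof (intro allI)
  fix X Y :: "complex^'n^'n"
  have adj: "cadj (A ** Y ** A) = A ** cadj Y ** A"
    using assms unfolding hermitian_def by (simp only: cadj_matrix_mult matrix_mul_assoc)
  have "trace (A ** X ** A ** cadj Y) = trace (A ** (X ** A ** cadj Y))"
    by (simp add: matrix_mul_assoc)
  also have "\<dots> = trace ((X ** A ** cadj Y) ** A)"
    by (rule trace_mul_sym)
  also have "\<dots> = trace (X ** cadj (A ** Y ** A))"
    by (simp only: adj matrix_mul_assoc)
  finally show "trace (A ** X ** A ** cadj Y) = trace (X ** cadj (A ** Y ** A))" .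
qed

lemma positive_map_sandwich:
  fixes A :: "complex^'n^'n"
  assumes "hermitian A"
  shows "positive_map (\<lambda>X. A ** X ** A)"
  unfolding positive_map_def psd_iff_cinner
proof (intro allI impI conjI)
  fix X :: "complex^'n^'n" and x
  assume X: "hermitian X \<and> (\<forall>x. 0 \<le> Re (cinner x (X *v x)))"
  then show "hermitian (A ** X ** A)"
    using assms unfolding hermitian_def by (simp only: cadj_matrix_mult matrix_mul_assoc)
  have "cinner x ((A ** X ** A) *v x) = cinner (A *v x) (X *v (A *v x))"
    by (simp only: matrix_vector_mul_assoc[symmetric] cinner_hermitian[OF assms])
  then show "0 \<le> Re (cinner x ((A ** X ** A) *v x))"
    using X by simp
qed

lemma idempotent_in_corner_outer:
  assumes e: "norm e = 1" and W: "W ** W = W" "W \<in> corner (outer e) (outer e)"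
  shows "W = 0 \<or> W = outer e"
proof -
  obtain Z where "W = outer e ** Z ** outer e"
    using W(2) unfolding corner_def by blast
  then obtain c where Wc: "W = (\<chi> i j. c * outer e $ i $ j)"
    using outer_sandwich by blast
  have "W ** W = (\<chi> i j. c * c * (outer e ** outer e) $ i $ j)"
    by (simp add: Wc matrix_matrix_mult_def sum_distrib_left mult_ac)
  then have square: "(\<chi> i j. c * c * outer e $ i $ j) = (\<chi> i j. c * outer e $ i $ j)"
    using W(1) Wc by (simp add: outer_mult_outer[OF e])
  have "e \<noteq> 0" using e by auto
  then obtain i j where ij: "outer e $ i $ j \<noteq> 0"
    using outer_eq_0_iff[of e] by (auto simp: vec_eq_iff)
  have "c * c * outer e $ i $ j = c * outer e $ i $ j"
    using arg_cong[OF square, of "\<lambda>M. M $ i $ j"] by simp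
  then have "c * (c - 1) = 0"
    using ij by (simp add: algebra_simps)
  then show ?thesis
    by (auto simp: Wc vec_eq_iff)
qed

lemma completely_reducible_sandwich_outer:
  fixes e :: "complex^'n"
  assumes e: "norm e = 1"
  shows "completely_reducible (\<lambda>X. (\<mu> *\<^sub>R outer e) ** X ** (\<mu> *\<^sub>R outer e))"
proof -
  define A where "A = \<mu> *\<^sub>R outer e"
  define P where "P = outer e"
  have PP: "P ** P = P" unfolding P_def by (rule outer_mult_outer[OF e])
  have P_proj: "orth_proj P" using PP by (simp add: orth_proj_def P_def)
  have herm: "hermitian A" by (simp add: A_def hermitian_def cadj_scaleR)
  have PA: "P ** A = A" and AP: "A ** P = A"
    by (simp_all add: A_def P_def matrix_scalar_ac scalar_matrix_assoc[symmetric] PP[unfolded P_def])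
  have sandwich_P: "A ** X ** A = A ** (P ** X ** P) ** A" for X
  proof -
    have "A ** (P ** X ** P) ** A = (A ** P) ** X ** (P ** A)" by (simp add: matrix_mul_assoc)
    then show ?thesis by (simp add: AP PA)
  qed
  have invariant: "A ** X ** A \<in> corner P P" for X
  proof -
    have "P ** (A ** X ** A) ** P = (P ** A) ** X ** (A ** P)" by (simp add: matrix_mul_assoc)
    then have "A ** X ** A = P ** (A ** X ** A) ** P" by (simp add: AP PA)
    then show ?thesis unfolding corner_def by blast
  qed
  have irreducible: "irreducible_on P (\<lambda>X. A ** X ** A)"
    unfolding irreducible_on_def
  proof (intro allI impI)
    fix W assume "orth_proj W \<and> corner W W \<subseteq> corner P P \<and> (\<lambda>X. A ** X ** A) ` corner W W \<subseteq> corner W W"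
    then have WW: "W ** W = W" and "corner W W \<subseteq> corner P P"
      unfolding orth_proj_def by auto
    moreover have "W \<in> corner W W"
      unfolding corner_def using WW by (intro CollectI exI[of _ W]) simp
    ultimately have "W \<in> corner P P" by blast
    with WW show "W = 0 \<or> W = P"
      unfolding P_def by (rule idempotent_in_corner_outer[OF e])
  qed
  have kernel: "A ** X ** A = 0" if "\<forall>Y\<in>corner P P. trace (X ** cadj Y) = 0" for X
  proof -
    have "P \<in> corner P P" using PP unfolding corner_def by (intro CollectI exI[of _ P]) simp
    then have "trace (X ** cadj P) = 0"
      using that by blast
    then have "cinner e (X *v e) = 0"
      by (simp add: P_def trace_mult_outer)
    then have "P ** X ** P = 0"
      by (simp add: P_def outer_sandwich vec_eq_iff)
    then show ?thesis by (simp add: sandwich_P)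
  qed
  show ?thesis
    unfolding completely_reducible_def A_def[symmetric]
    by (intro conjI selfadjoint_map_sandwich[OF herm] positive_map_sandwich[OF herm] exI[of _ "[P]"])
      (simp_all add: P_proj invariant irreducible kernel image_subset_iff)
qed

lemma trace_mult_cadj_corner:
  assumes "orth_proj W" "W ** X ** W = 0" "Y \<in> corner W W"
  shows "trace (X ** cadj Y) = 0"
proof -
  obtain Z where "Y = W ** Z ** W"
    using assms(3) unfolding corner_def by blast
  with assms(1) have "cadj Y = W ** cadj Z ** W"
    unfolding orth_proj_def by (simp add: cadj_matrix_mult matrix_mul_assoc)
  then have "trace (X ** cadj Y) = trace (W ** ((X ** W) ** cadj Z))"
    by (simp only: matrix_mul_assoc trace_mul_sym[of _ W])
  also have "\<dots> = trace ((W ** X ** W) ** cadj Z)"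
    by (simp only: matrix_mul_assoc)
  finally show ?thesis
    using assms(2) by (simp add: trace_def)
qed

lemma completely_reducible_sandwich_blocks:
  fixes A :: "complex^'n^'n"
  assumes "completely_reducible (\<lambda>X. A ** X ** A)"
  obtains Ws :: "(complex^'n^'n) list" where
    "\<forall>i<length Ws. orth_proj (Ws ! i)"
    "\<forall>i<length Ws. \<forall>j<length Ws. i \<noteq> j \<longrightarrow> Ws ! i ** Ws ! j = 0"
    "\<forall>i<length Ws. irreducible_on (Ws ! i) (\<lambda>X. A ** X ** A)"
    "\<And>X. \<forall>i<length Ws. Ws ! i ** X ** Ws ! i = 0 \<Longrightarrow> A ** X ** A = 0"
proof -
  obtain Ws :: "(complex^'n^'n) list" where
    proj: "\<forall>i<length Ws. orth_proj (Ws ! i)" and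
    orth: "\<forall>i<length Ws. \<forall>j<length Ws. i \<noteq> j \<longrightarrow> Ws ! i ** Ws ! j = 0" and
    irr: "\<forall>i<length Ws. irreducible_on (Ws ! i) (\<lambda>X. A ** X ** A)" and
    kernel: "\<forall>X. (\<forall>i<length Ws. \<forall>Y\<in>corner (Ws ! i) (Ws ! i). trace (X ** cadj Y) = 0)
               \<longrightarrow> A ** X ** A = 0"
    using assms unfolding completely_reducible_def by blast
  have "A ** X ** A = 0" if "\<forall>i<length Ws. Ws ! i ** X ** Ws ! i = 0" for X
  proof -
    have "\<forall>i<length Ws. \<forall>Y\<in>corner (Ws ! i) (Ws ! i). trace (X ** cadj Y) = 0"
      using proj that by (blast intro: trace_mult_cadj_corner)
    then show ?thesis using kernel by simp
  qed
  with proj orth irr show thesis by (rule that)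
qed

lemma sandwich_supported_in_block:
  fixes A :: "complex^'n^'n"
  assumes herm: "hermitian A" and "A \<noteq> 0"
    and proj: "\<forall>i<length Ws. orth_proj (Ws ! i)"
    and orth: "\<forall>i<length Ws. \<forall>j<length Ws. i \<noteq> j \<longrightarrow> Ws ! i ** Ws ! j = 0"
    and off_blocks: "\<And>X. \<forall>i<length Ws. Ws ! i ** X ** Ws ! i = 0 \<Longrightarrow> A ** X ** A = 0"
  shows "\<exists>i<length Ws. Ws ! i ** A = A"
proof (rule ccontr)
  assume none: "\<not> ?thesis"
  have "\<exists>i<length Ws. A ** Ws ! i \<noteq> 0"
  proof (rule ccontr)
    assume "\<not> ?thesis"
    then have "Ws ! i ** A ** Ws ! i = 0" if "i < length Ws" for i
      using proj that herm cadj_matrix_mult[of A "Ws ! i"]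
      by (simp add: orth_proj_def hermitian_def)
    then have "A ** A ** A = 0" by (intro off_blocks) simp
    with herm \<open>A \<noteq> 0\<close> show False using hermitian_cube_eq_0_imp_eq_0 by blast
  qed
  then obtain i where i: "i < length Ws" and "A ** Ws ! i \<noteq> 0" by blast
  define W where "W = Ws ! i"
  have WW: "W ** W = W" using proj i unfolding orth_proj_def W_def by blast
  \<comment> \<open>\<open>W Y (1 - W)\<close> has no diagonal block, so it is annihilated by the sandwich.\<close>
  have "(A ** W) ** Y ** ((mat 1 - W) ** A) = 0" for Y
  proof -
    have "Ws ! k ** (W ** Y ** (mat 1 - W)) ** Ws ! k = 0" if "k < length Ws" for k
    proof (cases "k = i")
      case True
      have "(mat 1 - W) ** W = 0" by (simp add: matrix_diff_rdistrib WW)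
      then show ?thesis using True by (simp add: W_def[symmetric] matrix_mul_assoc[symmetric])
    next
      case False
      then have "Ws ! k ** W = 0" using orth that i unfolding W_def by blast
      then show ?thesis by (simp add: matrix_mul_assoc)
    qed
    then have "A ** (W ** Y ** (mat 1 - W)) ** A = 0"
      by (intro off_blocks) simp
    then show ?thesis by (simp add: matrix_mul_assoc)
  qed
  then have "(mat 1 - W) ** A = 0"
    using matrix_mult_all_mult_eq_0 \<open>A ** Ws ! i \<noteq> 0\<close> by (auto simp: W_def)
  then have "W ** A = A" by (simp add: matrix_diff_rdistrib)
  with none i show False by (simp add: W_def)
qed

lemma corner_mono:
  assumes "hermitian W" "hermitian E" "W ** E = E"
  shows "corner E E \<subseteq> corner W W"
proof
  fix Y assume "Y \<in> corner E E"
  then obtain X where "Y = E ** X ** E" unfolding corner_def by blast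
  moreover have "W ** (E ** X ** E) ** W = (W ** E) ** X ** (E ** W)"
    by (simp add: matrix_mul_assoc)
  ultimately have "Y = W ** Y ** W"
    using assms hermitian_mult_eq_self_commute[OF assms(2,1)] by simp
  then show "Y \<in> corner W W" unfolding corner_def by blast
qed

lemma sandwich_eigenprojection_invariant:
  assumes "hermitian A" "A *v e = l *\<^sub>R e"
  shows "(\<lambda>X. A ** X ** A) ` corner (outer e) (outer e) \<subseteq> corner (outer e) (outer e)"
proof
  fix Y assume "Y \<in> (\<lambda>X. A ** X ** A) ` corner (outer e) (outer e)"
  then obtain X where "Y = A ** (outer e ** X ** outer e) ** A" unfolding corner_def by blast
  also have "\<dots> = (A ** outer e) ** X ** (outer e ** A)" by (simp add: matrix_mul_assoc)
  also have "\<dots> = outer e ** ((l * l) *\<^sub>R X) ** outer e"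
    by (simp add: matrix_mult_outer_eigenvector[OF assms(2)] outer_mult_matrix_eigenvector[OF assms]
        matrix_scalar_ac scalar_matrix_assoc[symmetric])
  finally show "Y \<in> corner (outer e) (outer e)" unfolding corner_def by blast
qed

lemma irreducible_sandwich_eigenvector:
  fixes A W :: "complex^'n^'n"
  assumes W: "orth_proj W" and irr: "irreducible_on W (\<lambda>X. A ** X ** A)"
    and herm: "hermitian A" and WA: "W ** A = A"
    and e: "norm e = 1" and "l \<noteq> 0" and eig: "A *v e = l *\<^sub>R e"
  shows "A = l *\<^sub>R outer e"
proof -
  have herm_W: "hermitian W" using W by (simp add: orth_proj_def hermitian_def)
  have herm_E: "hermitian (outer e)" by (simp add: hermitian_def)
  have "l *\<^sub>R (W *v e) = l *\<^sub>R e"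
    using arg_cong[OF WA, of "\<lambda>M. M *v e"]
    by (simp add: eig matrix_vector_mul_assoc[symmetric] matrix_vector_mult_scaleR_right)
  then have "W *v e = e" using \<open>l \<noteq> 0\<close> by simp
  then have "W ** outer e = outer e"
    unfolding matrix_mult_outer by (simp add: outer_def vec_eq_iff)
  then have "corner (outer e) (outer e) \<subseteq> corner W W"
    by (rule corner_mono[OF herm_W herm_E])
  moreover have "orth_proj (outer e)"
    by (simp add: orth_proj_def outer_mult_outer[OF e])
  ultimately have "outer e = 0 \<or> outer e = W"
    using irr sandwich_eigenprojection_invariant[OF herm eig] unfolding irreducible_on_def by blast
  moreover have "outer e \<noteq> 0" using e by (auto simp: outer_eq_0_iff)
  ultimately have "W = outer e" by simp
  then show ?thesis
    using hermitian_mult_eq_self_commute[OF herm herm_W WA] matrix_mult_outer_eigenvector[OF eig]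
    by simp
qed

lemma completely_reducible_sandwich_imp_rank_1:
  fixes A :: "complex^'n^'n"
  assumes cr: "completely_reducible (\<lambda>X. A ** X ** A)" and herm: "hermitian A"
    and diag: "0 < Re (A $ i $ i)"
  shows "\<exists>e l. norm e = 1 \<and> A = l *\<^sub>R outer e"
proof -
  obtain e l where e: "norm e = 1" and "0 < l" and eig: "A *v e = l *\<^sub>R e"
    using hermitian_positive_eigenvector[OF herm diag] by blast
  have "A \<noteq> 0" using diag by auto
  obtain Ws where proj: "\<forall>i<length Ws. orth_proj (Ws ! i)"
    and "\<forall>i<length Ws. \<forall>j<length Ws. i \<noteq> j \<longrightarrow> Ws ! i ** Ws ! j = 0"
    and irr: "\<forall>i<length Ws. irreducible_on (Ws ! i) (\<lambda>X. A ** X ** A)"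
    and "\<And>X. \<forall>i<length Ws. Ws ! i ** X ** Ws ! i = 0 \<Longrightarrow> A ** X ** A = 0"
    using completely_reducible_sandwich_blocks[OF cr] by blast
  then obtain i where "i < length Ws" "Ws ! i ** A = A"
    using sandwich_supported_in_block[OF herm \<open>A \<noteq> 0\<close>] by blast
  with proj irr have "orth_proj (Ws ! i)" "irreducible_on (Ws ! i) (\<lambda>X. A ** X ** A)"
    "Ws ! i ** A = A" by simp_all
  then have "A = l *\<^sub>R outer e"
    using irreducible_sandwich_eigenvector[OF _ _ herm _ e _ eig] \<open>0 < l\<close> by simp
  with e show ?thesis by blast
qed

section \<open>Pure states and their reduced states\<close>

definition coeff_matrix :: "complex^('k \<times> 'm) \<Rightarrow> complex^'m^'k" where
  "coeff_matrix v = (\<chi> i j. v $ (i, j))"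

text \<open>The partial trace of \<open>outer v\<close> over the second tensor factor.\<close>

definition reduced_state :: "complex^('k \<times> 'm::finite) \<Rightarrow> complex^'k^'k" where
  "reduced_state v = coeff_matrix v ** cadj (coeff_matrix v)"

lemma hermitian_reduced_state: "hermitian (reduced_state v)"
  by (simp add: reduced_state_def hermitian_def cadj_matrix_mult)

lemma reduced_state_entry:
  "reduced_state v $ i $ i' = (\<Sum>j\<in>UNIV. v $ (i, j) * cnj (v $ (i', j)))"
  by (simp add: reduced_state_def coeff_matrix_def matrix_matrix_mult_def cadj_def)

lemma Fmap_Gmap_outer:
  "Fmap (outer v) (Gmap (outer v) X) = reduced_state v ** X ** reduced_state v"
proof -
  have "Fmap (outer v) (Gmap (outer v) X) $ a $ b = (reduced_state v ** X ** reduced_state v) $ a $ b"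
    for a b
  proof -
    let ?f = "\<lambda>j l k m. v $ (a, j) * cnj (v $ (b, l)) * (v $ (k, l) * cnj (v $ (m, j)) * X $ m $ k)"
    have "Fmap (outer v) (Gmap (outer v) X) $ a $ b
        = (\<Sum>j\<in>UNIV. \<Sum>l\<in>UNIV. \<Sum>k\<in>UNIV. \<Sum>m\<in>UNIV. ?f j l k m)"
      by (simp add: Fmap_def Gmap_def outer_def sum_distrib_left)
    also have "\<dots> = (\<Sum>j\<in>UNIV. \<Sum>k\<in>UNIV. \<Sum>m\<in>UNIV. \<Sum>l\<in>UNIV. ?f j l k m)"
      by (rule sum.cong[OF refl], subst sum.swap, rule sum.cong[OF refl], rule sum.swap)
    also have "\<dots> = (\<Sum>k\<in>UNIV. \<Sum>m\<in>UNIV. \<Sum>j\<in>UNIV. \<Sum>l\<in>UNIV. ?f j l k m)"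
      by (subst sum.swap, rule sum.cong[OF refl], rule sum.swap)
    also have "\<dots> = (reduced_state v ** X ** reduced_state v) $ a $ b"
      by (simp add: reduced_state_entry matrix_matrix_mult_def sum_distrib_left
          sum_distrib_right mult_ac)
    finally show ?thesis .
  qed
  then show ?thesis by (simp add: vec_eq_iff)
qed

lemma outer_mem_CR_iff:
  "psd (outer v) \<Longrightarrow>
    outer v \<in> CR \<longleftrightarrow> completely_reducible (\<lambda>X. reduced_state v ** X ** reduced_state v)"
  by (simp add: CR_def comp_def Fmap_Gmap_outer)

lemma reduced_state_kronv: "reduced_state (kronv a b) = (norm b)\<^sup>2 *\<^sub>R outer a"
proof -
  have "reduced_state (kronv a b) $ i $ i' = a $ i * cnj (a $ i') * cinner b b" for i i'
    by (simp add: reduced_state_entry kronv_def cinner_def sum_distrib_left mult_ac)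
  then show ?thesis
    by (simp add: cinner_self outer_def vec_eq_iff scaleR_conv_of_real[where 'a=complex] mult.commute)
qed

lemma reduced_state_kronv_eq_scaled_outer:
  "\<exists>e \<mu>. norm e = 1 \<and> reduced_state (kronv a b) = \<mu> *\<^sub>R outer e"
proof (cases "a = 0")
  case True
  then have "reduced_state (kronv a b) = 0 *\<^sub>R outer (axis undefined 1)"
    by (simp add: reduced_state_kronv outer_def vec_eq_iff)
  then show ?thesis using norm_axis_1_complex by blast
next
  case False
  then have "reduced_state (kronv a b) = (norm a * norm b)\<^sup>2 *\<^sub>R outer (sgn a)"
    by (simp add: reduced_state_kronv sgn_div_norm divide_inverse outer_scaleR power_mult_distrib
        power_inverse)
  moreover have "norm (sgn a) = 1" using False by (simp add: norm_sgn)
  ultimately show ?thesis by blast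
qed

lemma reduced_state_eq_scaled_outer_imp_kronv:
  assumes e: "norm e = 1" and v: "reduced_state v = l *\<^sub>R outer e"
  shows "\<exists>b. v = kronv e b"
proof -
  define V where "V = coeff_matrix v"
  define Q where "Q = mat 1 - outer e"
  have "Q ** outer e = 0"
    by (simp add: Q_def matrix_diff_rdistrib outer_mult_outer[OF e])
  have "cadj Q = Q"
    by (simp add: Q_def cadj_def outer_def mat_def vec_eq_iff mult.commute)
  have "(Q ** V) ** cadj (Q ** V) = Q ** (V ** cadj V) ** Q"
    by (simp add: cadj_matrix_mult \<open>cadj Q = Q\<close> matrix_mul_assoc)
  also have "\<dots> = l *\<^sub>R ((Q ** outer e) ** Q)"
    using v by (simp add: reduced_state_def V_def[symmetric] matrix_scalar_ac
        scalar_matrix_assoc[symmetric])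
  finally have "(Q ** V) ** cadj (Q ** V) = 0"
    using \<open>Q ** outer e = 0\<close> by simp
  then have "Q ** V = 0" by (rule mult_cadj_eq_0_imp_eq_0)
  then have "V - outer e ** V = 0" by (simp only: Q_def matrix_diff_rdistrib matrix_mul_lid)
  then have V: "V = outer e ** V" by (simp only: right_minus_eq)
  define b where "b = (\<chi> j. \<Sum>k\<in>UNIV. cnj (e $ k) * v $ (k, j))"
  have "v $ (i, j) = e $ i * b $ j" for i j
  proof -
    have "V $ i $ j = (outer e ** V) $ i $ j"
      by (simp only: V[symmetric])
    then show ?thesis by (simp add: V_def b_def coeff_matrix_def outer_mult_matrix)
  qed
  then have "v $ p = kronv e b $ p" for p
    by (cases p) (simp add: kronv_def)
  then show ?thesis by (auto simp: vec_eq_iff)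
qed

lemma reduced_state_positive_diagonal:
  assumes "v \<noteq> 0"
  shows "\<exists>i. 0 < Re (reduced_state v $ i $ i)"
proof -
  obtain i j where "v $ (i, j) \<noteq> 0"
    using assms by (auto simp: vec_eq_iff)
  then have "coeff_matrix v $ i \<noteq> 0"
    by (auto simp: coeff_matrix_def vec_eq_iff)
  then have "0 < Re (reduced_state v $ i $ i)"
    by (simp add: reduced_state_def matrix_mult_cadj_diagonal)
  then show ?thesis ..
qed

theorem mainTheorem8:
  fixes \<gamma> :: "complex^('k::finite \<times> 'm::finite)^('k \<times> 'm)"
  assumes "psd \<gamma>" and "rank \<gamma> = 1"
  shows "\<gamma> \<in> CR \<longleftrightarrow> (\<exists>(a::complex^'k) (b::complex^'m). \<gamma> = outer (kronv a b))"
proof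
  assume "\<exists>(a::complex^'k) (b::complex^'m). \<gamma> = outer (kronv a b)"
  then obtain a b where \<gamma>: "\<gamma> = outer (kronv (a::complex^'k) (b::complex^'m))" by blast
  obtain e \<mu> where "norm e = 1" "reduced_state (kronv a b) = \<mu> *\<^sub>R outer e"
    using reduced_state_kronv_eq_scaled_outer by blast
  with assms(1) show "\<gamma> \<in> CR"
    by (simp add: \<gamma> outer_mem_CR_iff completely_reducible_sandwich_outer)
next
  assume "\<gamma> \<in> CR"
  obtain v where \<gamma>: "\<gamma> = outer v"
    using psd_rank_1_imp_outer[OF assms] by blast
  with rank_1_nonzero[OF assms(2)] obtain i where "0 < Re (reduced_state v $ i $ i)"
    using reduced_state_positive_diagonal outer_eq_0_iff by blast
  moreover have "completely_reducible (\<lambda>X. reduced_state v ** X ** reduced_state v)"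
    using \<open>\<gamma> \<in> CR\<close> assms(1) by (simp add: \<gamma> outer_mem_CR_iff)
  ultimately obtain e l where "norm e = 1" "reduced_state v = l *\<^sub>R outer e"
    using completely_reducible_sandwich_imp_rank_1[OF _ hermitian_reduced_state] by blast
  then obtain b where "v = kronv e b"
    using reduced_state_eq_scaled_outer_imp_kronv by blast
  with \<gamma> show "\<exists>(a::complex^'k) (b::complex^'m). \<gamma> = outer (kronv a b)" by blast
qed

end
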